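(* Let $(X_i)_{i\ge1}$ be a sequence in $\mathcal{H}_{\mbox{s-conv}}(S^n)$ converging in the Pompeiu-Hausdorff metric to $X\in\mathcal{H}(S^n)$. Then $X=X^{\circ\circ}$.
   Context: $S^n$ is the unit sphere in $\mathbb{R}^{n+1}$, $n\ge1$; $|PQ|=\arccos(P\cdot Q)$. $H(P)=\{Q\in S^n:P\cdot Q\ge0\}$ and $W^\circ=\bigcap_{P\in W}H(P)$, $W^{\circ\circ}=(W^\circ)^\circ$. $\mathcal{H}(S^n)$ is the set of non-empty closed subsets of $S^n$ with the Pompeiu-Hausdorff metric $h(A,B)=\max\{\max_{x\in A}\min_{y\in B}|xy|,\ \max_{y\in B}\min_{x\in A}|xy|\}$. A subset is hemispherical if it is disjoint from $H(P)$ for some $P\in S^n$. For $P,Q$ in a hemispherical set, the arc $PQ=\{((1-t)P+tQ)/\|(1-t)P+tQ\|:0\le t\le1\}$; a hemispherical set $W$ is spherical convex if $PQ\subset W$ for all $P,Q\in W$. $\mathcal{H}_{\mbox{s-conv}}(S^n)$ is the set of non-empty closed spherical convex subsets of $S^n$. *)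

theory Defs
  imports "HOL-Analysis.Analysis"
begin

text \<open>The unit sphere S^n is modelled as sphere 0 1 in a Euclidean space of dimension n+1.\<close>

definition Sph :: "'a::euclidean_space set" where
  "Sph = sphere 0 1"

definition sdist :: "'a::euclidean_space \<Rightarrow> 'a \<Rightarrow> real" where
  "sdist P Q = arccos (P \<bullet> Q)"

definition hemi :: "'a::euclidean_space \<Rightarrow> 'a set" where
  "hemi P = {Q \<in> Sph. P \<bullet> Q \<ge> 0}"

definition polar :: "'a::euclidean_space set \<Rightarrow> 'a set" where
  "polar W = {Q \<in> Sph. \<forall>P\<in>W. Q \<in> hemi P}"

definition sph_hausdist :: "'a::euclidean_space set \<Rightarrow> 'a set \<Rightarrow> real" where
  "sph_hausdist A B = max (SUP x\<in>A. INF y\<in>B. sdist x y) (SUP y\<in>B. INF x\<in>A. sdist x y)"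

definition HS :: "'a::euclidean_space set set" where
  "HS = {A. A \<noteq> {} \<and> closed A \<and> A \<subseteq> Sph}"

definition hemispherical :: "'a::euclidean_space set \<Rightarrow> bool" where
  "hemispherical W \<longleftrightarrow> W \<subseteq> Sph \<and> (\<exists>P\<in>Sph. W \<inter> hemi P = {})"

definition sarc :: "'a::euclidean_space \<Rightarrow> 'a \<Rightarrow> 'a set" where
  "sarc P Q = {((1 - t) *\<^sub>R P + t *\<^sub>R Q) /\<^sub>R norm ((1 - t) *\<^sub>R P + t *\<^sub>R Q) | t. 0 \<le> t \<and> t \<le> 1}"

definition sconvex :: "'a::euclidean_space set \<Rightarrow> bool" where
  "sconvex W \<longleftrightarrow> hemispherical W \<and> (\<forall>P\<in>W. \<forall>Q\<in>W. sarc P Q \<subseteq> W)"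

definition HS_sconv :: "'a::euclidean_space set set" where
  "HS_sconv = {A \<in> HS. sconvex A}"

end

theory Submission
  imports Defs
begin

text \<open>
  Passing to cones over the sphere, X^{\<circ>\<circ>} = X says that the cone over X is a closed
  convex cone, i.e. equal to its double dual. The cone is closed because X is compact.
  It is convex because X inherits closure under spherical arcs from the X_i: points
  of X are limits of points of X_i, the arc between two approximating points lies in
  X_i, and limits of points of X_i lie in X.
\<close>

lemma Sph_inner_bounds:
  assumes "P \<in> Sph" "Q \<in> Sph"
  shows "-1 \<le> P \<bullet> Q" "P \<bullet> Q \<le> 1"
proof -
  have "\<bar>P \<bullet> Q\<bar> \<le> norm P * norm Q" by (rule Cauchy_Schwarz_ineq2)
  moreover have "norm P = 1" "norm Q = 1" using assms by (auto simp: Sph_def)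
  ultimately show "-1 \<le> P \<bullet> Q" "P \<bullet> Q \<le> 1" by auto
qed

lemma sdist_nonneg:
  assumes "P \<in> Sph" "Q \<in> Sph"
  shows "0 \<le> sdist P Q"
  using Sph_inner_bounds[OF assms] by (simp add: sdist_def arccos_lbound)

lemma sdist_commute: "sdist P Q = sdist Q P"
  by (simp add: sdist_def inner_commute)

lemma Sph_norm_diff_squared:
  assumes "P \<in> Sph" "Q \<in> Sph"
  shows "(norm (P - Q))\<^sup>2 = 2 - 2 * cos (sdist P Q)"
proof -
  have "P \<bullet> P = 1" "Q \<bullet> Q = 1" using assms by (simp_all add: Sph_def norm_eq_1)
  moreover have "cos (sdist P Q) = P \<bullet> Q"
    using Sph_inner_bounds[OF assms] by (simp add: sdist_def cos_arccos)
  ultimately show ?thesis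
    by (simp add: power2_norm_eq_inner algebra_simps inner_commute)
qed

lemma Sph_diff_tendsto_0_if_sdist:
  assumes "eventually (\<lambda>i. a i \<in> Sph \<and> b i \<in> Sph) sequentially"
    and "(\<lambda>i. sdist (a i) (b i)) \<longlonglongrightarrow> 0"
  shows "(\<lambda>i. a i - b i) \<longlonglongrightarrow> 0"
proof -
  have "(\<lambda>i. 2 - 2 * cos (sdist (a i) (b i))) \<longlonglongrightarrow> 2 - 2 * cos 0"
    by (intro tendsto_intros assms(2))
  hence "(\<lambda>i. 2 - 2 * cos (sdist (a i) (b i))) \<longlonglongrightarrow> 0" by simp
  hence "(\<lambda>i. (norm (a i - b i))\<^sup>2) \<longlonglongrightarrow> 0"
    by (rule Lim_transform_eventually)
      (use assms(1) in \<open>auto elim!: eventually_mono simp: Sph_norm_diff_squared\<close>)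
  hence "(\<lambda>i. sqrt ((norm (a i - b i))\<^sup>2)) \<longlonglongrightarrow> sqrt 0" by (intro tendsto_intros)
  thus ?thesis by (simp add: tendsto_norm_zero_iff)
qed

lemma sph_hausdist_commute: "sph_hausdist A B = sph_hausdist B A"
  by (simp add: sph_hausdist_def sdist_commute max.commute)

lemma sph_hausdist_witness:
  assumes "A \<subseteq> Sph" "B \<subseteq> Sph" "B \<noteq> {}" "x \<in> A" "e > 0"
  shows "\<exists>y\<in>B. sdist x y < sph_hausdist A B + e"
proof -
  have bdd: "bdd_below ((\<lambda>y. sdist x y) ` B)"
    using assms sdist_nonneg by (auto intro!: bdd_belowI2)
  have "(INF y\<in>B. sdist x y) \<le> pi" if "x \<in> A" for x
  proof -
    obtain y where "y \<in> B" using assms by auto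
    have "(INF y\<in>B. sdist x y) \<le> sdist x y"
      using \<open>y \<in> B\<close> \<open>x \<in> A\<close> assms sdist_nonneg by (auto intro!: cINF_lower bdd_belowI2)
    also have "\<dots> \<le> pi"
      using Sph_inner_bounds[of x y] \<open>y \<in> B\<close> \<open>x \<in> A\<close> assms
      by (auto simp: sdist_def intro: arccos_ubound)
    finally show ?thesis .
  qed
  hence "(INF y\<in>B. sdist x y) \<le> (SUP x\<in>A. INF y\<in>B. sdist x y)"
    using assms(4) by (intro cSUP_upper2[where x = x]) (auto intro!: bdd_aboveI2)
  hence "(INF y\<in>B. sdist x y) < sph_hausdist A B + e"
    using assms(5) unfolding sph_hausdist_def by linarith
  thus ?thesis using assms(3) bdd by (simp add: cINF_less_iff)
qed

lemma sph_hausdist_tendsto_0_near_seq: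
  assumes "eventually (\<lambda>i. A i \<subseteq> Sph \<and> B i \<subseteq> Sph \<and> B i \<noteq> {} \<and> x i \<in> A i) sequentially"
    and "(\<lambda>i. sph_hausdist (A i) (B i)) \<longlonglongrightarrow> 0"
  shows "\<exists>y. eventually (\<lambda>i. y i \<in> B i) sequentially \<and> (\<lambda>i. x i - y i) \<longlonglongrightarrow> 0"
proof -
  \<comment> \<open>The slack keeps the choice possible: the infima in the Hausdorff distance need not be attained.\<close>
  define bound where "bound i = sph_hausdist (A i) (B i) + inverse (real (Suc i))" for i
  define good where "good i y \<longleftrightarrow> y \<in> B i \<and> x i \<in> Sph \<and> y \<in> Sph \<and> sdist (x i) y < bound i"
    for i y
  define y where "y i = (SOME y. good i y)" for i
  have "eventually (\<lambda>i. good i (y i)) sequentially"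
    using assms(1)
  proof eventually_elim
    case (elim i)
    then obtain z where "z \<in> B i" "sdist (x i) z < bound i"
      using sph_hausdist_witness[of "A i" "B i" "x i" "inverse (real (Suc i))"]
      unfolding bound_def by auto
    hence "good i z" using elim unfolding good_def by auto
    thus ?case unfolding y_def by (rule someI)
  qed
  moreover have "(\<lambda>i. sdist (x i) (y i)) \<longlonglongrightarrow> 0"
  proof (rule tendsto_sandwich[OF _ _ tendsto_const])
    show "(\<lambda>i. bound i) \<longlonglongrightarrow> 0"
      using tendsto_add[OF assms(2) LIMSEQ_inverse_real_of_nat] by (simp add: bound_def)
  qed (use calculation in \<open>auto elim!: eventually_mono simp: good_def sdist_nonneg less_imp_le\<close>)
  ultimately show ?thesis
    by (intro exI[of _ y] conjI Sph_diff_tendsto_0_if_sdist) (auto elim!: eventually_mono simp: good_def)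
qed

lemma normalized_nonneg_comb_in_sarc:
  assumes "\<alpha> \<ge> 0" "\<beta> \<ge> 0" "\<alpha> *\<^sub>R P + \<beta> *\<^sub>R Q \<noteq> 0"
  shows "(\<alpha> *\<^sub>R P + \<beta> *\<^sub>R Q) /\<^sub>R norm (\<alpha> *\<^sub>R P + \<beta> *\<^sub>R Q) \<in> sarc P Q"
proof -
  have pos: "\<alpha> + \<beta> > 0" using assms by (cases "\<alpha> = 0") auto
  define t where "t = \<beta> / (\<alpha> + \<beta>)"
  have "0 \<le> t" "t \<le> 1" using assms pos by (auto simp: t_def)
  moreover have "(1 - t) *\<^sub>R P + t *\<^sub>R Q = inverse (\<alpha> + \<beta>) *\<^sub>R (\<alpha> *\<^sub>R P + \<beta> *\<^sub>R Q)"
    using pos by (simp add: t_def field_simps scaleR_add_right scaleR_diff_left)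
  ultimately show ?thesis
    unfolding sarc_def using pos by (intro CollectI exI[of _ t]) (simp add: abs_of_pos)
qed

lemma convex_conic_hull_if_closed_under_normalized_combs:
  assumes "\<And>p q \<alpha> \<beta>. p \<in> X \<Longrightarrow> q \<in> X \<Longrightarrow> \<alpha> \<ge> 0 \<Longrightarrow> \<beta> \<ge> 0 \<Longrightarrow> \<alpha> *\<^sub>R p + \<beta> *\<^sub>R q \<noteq> 0
      \<Longrightarrow> (\<alpha> *\<^sub>R p + \<beta> *\<^sub>R q) /\<^sub>R norm (\<alpha> *\<^sub>R p + \<beta> *\<^sub>R q) \<in> X"
  shows "convex (conic hull X)"
  unfolding convex_alt
proof (intro ballI allI impI)
  fix x y and u :: real
  assume "x \<in> conic hull X" "y \<in> conic hull X" and u: "0 \<le> u \<and> u \<le> 1"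
  then obtain a p b q where x: "x = a *\<^sub>R p" "a \<ge> 0" "p \<in> X" and y: "y = b *\<^sub>R q" "b \<ge> 0" "q \<in> X"
    by (auto simp: conic_hull_explicit)
  define w where "w = ((1 - u) * a) *\<^sub>R p + (u * b) *\<^sub>R q"
  have "(1 - u) *\<^sub>R x + u *\<^sub>R y = w" by (simp add: w_def x y)
  moreover have "w \<in> conic hull X"
  proof (cases "w = 0")
    case True
    then show ?thesis using x by auto
  next
    case False
    have "w /\<^sub>R norm w \<in> X" unfolding w_def
      by (rule assms) (use x y u False in \<open>auto simp: w_def\<close>)
    hence "norm w *\<^sub>R (w /\<^sub>R norm w) \<in> conic hull X"
      by (intro conic_mul[OF conic_conic_hull] hull_inc) simp_all
    thus ?thesis using False by simp
  qed
  ultimately show "(1 - u) *\<^sub>R x + u *\<^sub>R y \<in> conic hull X" by simp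
qed

lemma separating_hyperplane_closed_conic:
  fixes K :: "'a::euclidean_space set"
  assumes "conic K" "convex K" "closed K" "K \<noteq> {}" "z \<notin> K"
  obtains a where "a \<bullet> z < 0" "\<forall>x\<in>K. 0 \<le> a \<bullet> x"
proof -
  obtain a b where ab: "a \<bullet> z < b" "\<forall>x\<in>K. b < a \<bullet> x"
    using separating_hyperplane_closed_point[OF assms(2,3,5)] by blast
  have "b < 0" using ab conic_contains_0[OF assms(1)] assms(4) by force
  have "0 \<le> a \<bullet> x" if "x \<in> K" for x
  proof (rule ccontr)
    assume neg: "\<not> 0 \<le> a \<bullet> x"
    have "(b / (a \<bullet> x)) *\<^sub>R x \<in> K"
      using conic_mul[OF assms(1) that] \<open>b < 0\<close> neg by (simp add: divide_nonpos_neg)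
    hence "b < a \<bullet> ((b / (a \<bullet> x)) *\<^sub>R x)" using ab by blast
    thus False using neg by simp
  qed
  with ab \<open>b < 0\<close> show ?thesis by (intro that[of a]) auto
qed

lemma conic_hull_inter_Sph:
  assumes "X \<subseteq> Sph"
  shows "conic hull X \<inter> Sph = X"
proof (intro equalityI subsetI)
  fix Q assume "Q \<in> conic hull X \<inter> Sph"
  then obtain c x where "Q = c *\<^sub>R x" "c \<ge> 0" "x \<in> X" "norm Q = 1"
    by (auto simp: conic_hull_explicit Sph_def)
  moreover from this have "norm x = 1" using assms by (auto simp: Sph_def)
  ultimately show "Q \<in> X" by simp
qed (use assms in \<open>auto intro: hull_inc\<close>)

lemma polar_polar_eq_if_convex_conic_hull:
  assumes "X \<in> HS" "convex (conic hull X)"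
  shows "polar (polar X) = X"
proof
  have X: "X \<noteq> {}" "closed X" "X \<subseteq> Sph" using assms(1) by (auto simp: HS_def)
  show "X \<subseteq> polar (polar X)"
    using X by (auto simp: polar_def hemi_def inner_commute)
  show "polar (polar X) \<subseteq> X"
  proof
    fix Q assume Q: "Q \<in> polar (polar X)"
    show "Q \<in> X"
    proof (rule ccontr)
      assume "Q \<notin> X"
      moreover have "Q \<in> Sph" using Q by (simp add: polar_def)
      ultimately have "Q \<notin> conic hull X" using conic_hull_inter_Sph[OF X(3)] by blast
      moreover have "closed (conic hull X)"
        using X by (intro closed_conic_hull)
          (auto simp: Sph_def compact_eq_bounded_closed intro: bounded_subset[OF bounded_sphere])
      ultimately obtain a where a: "a \<bullet> Q < 0" "\<forall>x\<in>conic hull X. 0 \<le> a \<bullet> x"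
        using separating_hyperplane_closed_conic[OF conic_conic_hull assms(2)] X(1)
        by (metis conic_hull_eq_empty)
      hence "a \<noteq> 0" by auto
      have "\<forall>x\<in>X. 0 \<le> a \<bullet> x" using a(2) by (auto intro: hull_inc)
      hence "a /\<^sub>R norm a \<in> polar X"
        using \<open>a \<noteq> 0\<close> by (auto simp: polar_def hemi_def Sph_def inner_commute)
      hence "0 \<le> (a /\<^sub>R norm a) \<bullet> Q" using Q by (auto simp: polar_def hemi_def)
      thus False using a(1) \<open>a \<noteq> 0\<close> by (simp add: zero_le_mult_iff)
    qed
  qed
qed

context
  fixes Xs :: "nat \<Rightarrow> 'a::euclidean_space set" and X :: "'a set"
  assumes Xs_HS: "eventually (\<lambda>i. Xs i \<in> HS) sequentially"
    and X_HS: "X \<in> HS"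
    and hausdist_tendsto: "(\<lambda>i. sph_hausdist (Xs i) X) \<longlonglongrightarrow> 0"
begin

lemma hausdist_limit_approx:
  assumes "x \<in> X"
  obtains s where "eventually (\<lambda>i. s i \<in> Xs i) sequentially" "s \<longlonglongrightarrow> x"
proof -
  have "eventually (\<lambda>i. X \<subseteq> Sph \<and> Xs i \<subseteq> Sph \<and> Xs i \<noteq> {} \<and> x \<in> X) sequentially"
    using Xs_HS X_HS assms by (auto simp: HS_def elim!: eventually_mono)
  moreover have "(\<lambda>i. sph_hausdist X (Xs i)) \<longlonglongrightarrow> 0"
    using hausdist_tendsto by (simp add: sph_hausdist_commute)
  ultimately obtain s where "eventually (\<lambda>i. s i \<in> Xs i) sequentially" "(\<lambda>i. x - s i) \<longlonglongrightarrow> 0"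
    using sph_hausdist_tendsto_0_near_seq[of "\<lambda>_. X" Xs "\<lambda>_. x"] by blast
  moreover from this(2) have "(\<lambda>i. x - (x - s i)) \<longlonglongrightarrow> x - 0" by (intro tendsto_intros)
  ultimately show ?thesis using that by simp
qed

lemma hausdist_limit_mem:
  assumes "eventually (\<lambda>i. u i \<in> Xs i) sequentially" "u \<longlonglongrightarrow> v"
  shows "v \<in> X"
proof -
  have "eventually (\<lambda>i. Xs i \<subseteq> Sph \<and> X \<subseteq> Sph \<and> X \<noteq> {} \<and> u i \<in> Xs i) sequentially"
    using eventually_conj[OF Xs_HS assms(1)] X_HS by (auto simp: HS_def elim!: eventually_mono)
  then obtain w where w: "eventually (\<lambda>i. w i \<in> X) sequentially" "(\<lambda>i. u i - w i) \<longlonglongrightarrow> 0"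
    using sph_hausdist_tendsto_0_near_seq[of Xs "\<lambda>_. X" u] hausdist_tendsto by blast
  have "(\<lambda>i. u i - (u i - w i)) \<longlonglongrightarrow> v - 0" by (intro tendsto_intros assms(2) w(2))
  hence "w \<longlonglongrightarrow> v" by simp
  with w(1) show ?thesis
    using X_HS by (auto simp: HS_def intro: Lim_in_closed_set)
qed

lemma hausdist_limit_closed_under_normalized_combs:
  assumes arcs: "eventually (\<lambda>i. \<forall>P\<in>Xs i. \<forall>Q\<in>Xs i. sarc P Q \<subseteq> Xs i) sequentially"
    and "p \<in> X" "q \<in> X" "\<alpha> \<ge> 0" "\<beta> \<ge> 0" "\<alpha> *\<^sub>R p + \<beta> *\<^sub>R q \<noteq> 0"
  shows "(\<alpha> *\<^sub>R p + \<beta> *\<^sub>R q) /\<^sub>R norm (\<alpha> *\<^sub>R p + \<beta> *\<^sub>R q) \<in> X"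
proof -
  obtain ps where ps: "eventually (\<lambda>i. ps i \<in> Xs i) sequentially" "ps \<longlonglongrightarrow> p"
    using hausdist_limit_approx \<open>p \<in> X\<close> by blast
  obtain qs where qs: "eventually (\<lambda>i. qs i \<in> Xs i) sequentially" "qs \<longlonglongrightarrow> q"
    using hausdist_limit_approx \<open>q \<in> X\<close> by blast
  define ws where "ws i = \<alpha> *\<^sub>R ps i + \<beta> *\<^sub>R qs i" for i
  have ws: "ws \<longlonglongrightarrow> \<alpha> *\<^sub>R p + \<beta> *\<^sub>R q" unfolding ws_def by (intro tendsto_intros ps(2) qs(2))
  hence "eventually (\<lambda>i. ws i \<noteq> 0) sequentially"
    using assms(6) by (rule tendsto_imp_eventually_ne)
  with arcs ps(1) qs(1) have "eventually (\<lambda>i. ws i /\<^sub>R norm (ws i) \<in> Xs i) sequentially"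
  proof eventually_elim
    case (elim i)
    then show ?case
      using normalized_nonneg_comb_in_sarc[of \<alpha> \<beta> "ps i" "qs i"] assms(4,5)
      unfolding ws_def by blast
  qed
  moreover have "(\<lambda>i. ws i /\<^sub>R norm (ws i)) \<longlonglongrightarrow>
      (\<alpha> *\<^sub>R p + \<beta> *\<^sub>R q) /\<^sub>R norm (\<alpha> *\<^sub>R p + \<beta> *\<^sub>R q)"
    using assms(6) by (intro tendsto_intros ws) auto
  ultimately show ?thesis by (rule hausdist_limit_mem)
qed

end

theorem lemma5:
  fixes Xs :: "nat \<Rightarrow> 'a::euclidean_space set" and X :: "'a set"
  assumes "DIM('a) \<ge> 2"
    and "\<forall>i\<ge>1. Xs i \<in> HS_sconv"
    and "X \<in> HS"
    and "(\<lambda>i. sph_hausdist (Xs i) X) \<longlonglongrightarrow> 0"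
  shows "X = polar (polar X)"
proof -
  have "eventually (\<lambda>i. Xs i \<in> HS_sconv) sequentially"
    using eventually_ge_at_top[of "1::nat"] by eventually_elim (use assms(2) in auto)
  hence "eventually (\<lambda>i. Xs i \<in> HS) sequentially"
    and "eventually (\<lambda>i. \<forall>P\<in>Xs i. \<forall>Q\<in>Xs i. sarc P Q \<subseteq> Xs i) sequentially"
    by (auto simp: HS_sconv_def sconvex_def elim!: eventually_mono)
  hence "convex (conic hull X)"
    using assms(3,4) by (intro convex_conic_hull_if_closed_under_normalized_combs
        hausdist_limit_closed_under_normalized_combs)
  thus ?thesis using polar_polar_eq_if_convex_conic_hull assms(3) by metis
qed

end
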